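(* Let $d=2\delta$ be even, $H\ge1$, $T_{\max}\ge2$. Let $\mu\in\mathbb{C}^\delta$ with $|\mu_k|=1$ and $\lambda=(\mu_1,\bar\mu_1,\dots,\mu_\delta,\bar\mu_\delta)\in\mathbb{C}^d$, and $e_t=\lambda^{t-1}$. Let the parameters satisfy, for every $T\in\{2,\dots,T_{\max}\}$, $P_{T-1,T-1}=-1$, $P_{T-1,T}=2$, $P_{T-1,t}=0$ for $t\le T-2$, and $\mathtt{B}^\top\mathtt{A}=\frac12\mathrm{diag}(J,\dots,J)$ (block diagonal with $\delta$ blocks), where $J\in\mathbb{R}^{2\times2}$ has all entries equal to $1$. Then $\mathcal{T}_\theta(e_{1:T})=\lambda^T$ for every $T\in\{2,\dots,T_{\max}\}$; in particular the loss in the orthogonal setting vanishes, and $H=\delta$ heads suffice to achieve this.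
   Context: Model: parameters $\mathtt{A},\mathtt{B}\in\mathbb{R}^{H\times d}$ with rows $a_h,b_h\in\mathbb{R}^d$ and $P\in\mathbb{R}^{T_{\max}\times T_{\max}}$; $\mathcal{T}_\theta(e_{1:T})=\sum_{h=1}^H\sum_{t=1}^T P_{T-1,t}\langle e_t,\mathrm{diag}(a_h)e_{T-1}\rangle_{\mathbb{C}}\mathrm{diag}(b_h)e_t$ with $\langle x,y\rangle_{\mathbb{C}}=\sum_i x_i\bar y_i$. Orthogonal setting loss: $\ell(\theta)=\sum_{T=2}^{T_{\max}}\mathbb{E}\|\mathcal{T}_\theta(e_{1:T})-\lambda^T\|^2$ where $\mu$ has i.i.d. coordinates uniform on the unit circle. Powers are coordinatewise. *)

theory Defs
  imports "HOL-Probability.Probability"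
begin

(* Conventions: vector coordinates are 0-based (i < d = 2*delta); token positions
   and rows/columns of P are 1-based as in the paper; heads h < H. *)

definition lam :: "(nat \<Rightarrow> complex) \<Rightarrow> nat \<Rightarrow> complex" where
  "lam \<mu> i = (if even i then \<mu> (i div 2) else cnj (\<mu> (i div 2)))"

definition emb :: "(nat \<Rightarrow> complex) \<Rightarrow> nat \<Rightarrow> nat \<Rightarrow> complex" where
  "emb \<mu> t = (\<lambda>i. lam \<mu> i ^ (t - 1))"

definition cinner :: "nat \<Rightarrow> (nat \<Rightarrow> complex) \<Rightarrow> (nat \<Rightarrow> complex) \<Rightarrow> complex" where
  "cinner d x y = (\<Sum>j<d. x j * cnj (y j))"

(* T_theta(e_{1:T}), coordinate i; A h j = (a_h)_j, B h i = (b_h)_i *)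
definition Tth :: "nat \<Rightarrow> nat \<Rightarrow> (nat \<Rightarrow> nat \<Rightarrow> real) \<Rightarrow> (nat \<Rightarrow> nat \<Rightarrow> real)
     \<Rightarrow> (nat \<Rightarrow> nat \<Rightarrow> real) \<Rightarrow> nat \<Rightarrow> (nat \<Rightarrow> nat \<Rightarrow> complex) \<Rightarrow> nat \<Rightarrow> complex" where
  "Tth d H A B P T e i =
     (\<Sum>h<H. \<Sum>t=1..T. of_real (P (T - 1) t)
        * cinner d (e t) (\<lambda>j. of_real (A h j) * e (T - 1) j)
        * of_real (B h i) * e t i)"

definition unif_circle :: "complex measure" where
  "unif_circle = distr (uniform_measure lborel {0..2*pi}) borel (\<lambda>t. cis t)"

definition mu_law :: "nat \<Rightarrow> (nat \<Rightarrow> complex) measure" where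
  "mu_law \<delta> = PiM {..<\<delta>} (\<lambda>_. unif_circle)"

definition loss :: "nat \<Rightarrow> nat \<Rightarrow> (nat \<Rightarrow> nat \<Rightarrow> real) \<Rightarrow> (nat \<Rightarrow> nat \<Rightarrow> real)
     \<Rightarrow> (nat \<Rightarrow> nat \<Rightarrow> real) \<Rightarrow> nat \<Rightarrow> real" where
  "loss \<delta> H A B P Tmax =
     (\<Sum>T=2..Tmax. \<integral>\<mu>. (\<Sum>i<2*\<delta>. (cmod (Tth (2*\<delta>) H A B P T (emb \<mu>) i - lam \<mu> i ^ T))\<^sup>2) \<partial>mu_law \<delta>)"

(* (B^T A)_{ij} = 1/2 diag(J,...,J)_{ij} *)
definition BA_cond :: "nat \<Rightarrow> nat \<Rightarrow> (nat \<Rightarrow> nat \<Rightarrow> real) \<Rightarrow> (nat \<Rightarrow> nat \<Rightarrow> real) \<Rightarrow> bool" where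
  "BA_cond \<delta> H A B \<longleftrightarrow> (\<forall>i<2*\<delta>. \<forall>j<2*\<delta>.
      (\<Sum>h<H. B h i * A h j) = (if i div 2 = j div 2 then 1/2 else 0))"

definition P_cond :: "nat \<Rightarrow> (nat \<Rightarrow> nat \<Rightarrow> real) \<Rightarrow> bool" where
  "P_cond Tmax P \<longleftrightarrow> (\<forall>T\<in>{2..Tmax}. P (T - 1) (T - 1) = -1 \<and> P (T - 1) T = 2
      \<and> (\<forall>t\<in>{1..T - 2}. P (T - 1) t = 0))"

end

theory Submission
  imports Defs
begin

(* The model depends on A and B only through M = B^T A: coordinate i of the output is
   sum_t P_{T-1,t} (sum_j M_ij (e_t)_j conj((e_{T-1})_j)) (e_t)_i.  Only t = T-1 and t = T
   survive, and since |lambda_j| = 1 the inner sums become sum_j M_ij = 1 and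
   sum_j M_ij lambda_j = (lambda_i + conj lambda_i)/2, because M averages over the pair
   {mu_k, conj mu_k} containing lambda_i.  Hence the output is
   (lambda_i + 1/lambda_i) lambda_i^(T-1) - lambda_i^(T-2) = lambda_i^T, and the loss vanishes
   because mu has unit coordinates almost surely. *)

lemma Tth_eq_sum_BA:
  "Tth d H A B P T e i =
     (\<Sum>t=1..T. of_real (P (T - 1) t)
        * (\<Sum>j<d. of_real (\<Sum>h<H. B h i * A h j) * e t j * cnj (e (T - 1) j)) * e t i)"
  unfolding Tth_def cinner_def
proof (subst sum.swap, rule sum.cong[OF refl])
  fix t
  have "(\<Sum>h<H. of_real (P (T - 1) t) * (\<Sum>j<d. e t j * cnj (of_real (A h j) * e (T - 1) j))
        * of_real (B h i) * e t i)
      = of_real (P (T - 1) t)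
        * (\<Sum>h<H. \<Sum>j<d. of_real (B h i * A h j) * e t j * cnj (e (T - 1) j)) * e t i"
    by (simp add: sum_distrib_left sum_distrib_right mult_ac)
  also have "(\<Sum>h<H. \<Sum>j<d. of_real (B h i * A h j) * e t j * cnj (e (T - 1) j))
      = (\<Sum>j<d. of_real (\<Sum>h<H. B h i * A h j) * e t j * cnj (e (T - 1) j))"
    by (subst sum.swap) (simp add: sum_distrib_right)
  finally show "(\<Sum>h<H. of_real (P (T - 1) t) * (\<Sum>j<d. e t j * cnj (of_real (A h j) * e (T - 1) j))
        * of_real (B h i) * e t i)
      = of_real (P (T - 1) t)
        * (\<Sum>j<d. of_real (\<Sum>h<H. B h i * A h j) * e t j * cnj (e (T - 1) j)) * e t i" .
qed

lemma sum_atLeastAtMost_last_two: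
  fixes f :: "nat \<Rightarrow> 'a::comm_monoid_add"
  assumes "2 \<le> T" and "\<forall>t\<in>{1..T - 2}. f t = 0"
  shows "(\<Sum>t=1..T. f t) = f (T - 1) + f T"
proof -
  obtain n where T: "T = Suc (Suc n)" using assms(1) by (metis add_2_eq_Suc le_Suc_ex)
  then show ?thesis using assms(2) by (simp add: sum.cl_ivl_Suc add.assoc)
qed

lemma sum_pair_block:
  fixes c :: "'a::semiring_0" and k \<delta> :: nat
  assumes "k < \<delta>"
  shows "(\<Sum>j<2*\<delta>. (if j div 2 = k then c else 0) * f j) = c * (f (2*k) + f (2*k + 1))"
proof -
  have "(\<Sum>j<2*\<delta>. (if j div 2 = k then c else 0) * f j) = (\<Sum>j<2*\<delta>. if j div 2 = k then c * f j else 0)"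
    by (rule sum.cong) auto
  also have "\<dots> = (\<Sum>j\<in>{j \<in> {..<2*\<delta>}. j div 2 = k}. c * f j)"
    by (rule sum.inter_filter[symmetric]) simp
  also have "{j \<in> {..<2*\<delta>}. j div 2 = k} = {2*k, 2*k + 1}"
    using assms by auto
  finally show ?thesis by (simp add: distrib_left)
qed

lemma lam_mult_cnj:
  assumes "cmod (\<mu> (j div 2)) = 1"
  shows "lam \<mu> j * cnj (lam \<mu> j) = 1"
proof -
  have "cmod (lam \<mu> j) = 1" using assms by (simp add: lam_def)
  then show ?thesis using complex_norm_square[of "lam \<mu> j"] by simp
qed

lemma lam_pair_sum: "lam \<mu> (2*(i div 2)) + lam \<mu> (2*(i div 2) + 1) = lam \<mu> i + cnj (lam \<mu> i)"
  by (auto simp: lam_def elim!: evenE oddE)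

lemma emb_mult_cnj_emb:
  assumes "lam \<mu> j * cnj (lam \<mu> j) = 1" and "1 \<le> s" and "s \<le> t"
  shows "emb \<mu> t j * cnj (emb \<mu> s j) = lam \<mu> j ^ (t - s)"
proof -
  have "t - 1 = (t - s) + (s - 1)" using assms(2,3) by simp
  then have "emb \<mu> t j * cnj (emb \<mu> s j) = lam \<mu> j ^ (t - s) * (lam \<mu> j * cnj (lam \<mu> j)) ^ (s - 1)"
    by (simp add: emb_def power_add power_mult_distrib)
  then show ?thesis using assms(1) by simp
qed

lemma Tth_emb_eq_lam_power:
  assumes unit: "\<forall>k<\<delta>. cmod (\<mu> k) = 1" and BA: "BA_cond \<delta> H A B"
    and P_diag: "P (T - 1) (T - 1) = -1" and P_next: "P (T - 1) T = 2"
    and P_zero: "\<forall>t\<in>{1..T - 2}. P (T - 1) t = 0"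
    and T: "2 \<le> T" and i: "i < 2*\<delta>"
  shows "Tth (2*\<delta>) H A B P T (emb \<mu>) i = lam \<mu> i ^ T"
proof -
  define l where "l = lam \<mu> i"
  define k where "k = i div 2"
  have k: "k < \<delta>" using i by (simp add: k_def)
  have l_unit: "lam \<mu> j * cnj (lam \<mu> j) = 1" if "j < 2*\<delta>" for j
    using that unit by (intro lam_mult_cnj) simp
  have row: "(\<Sum>j<2*\<delta>. of_real (\<Sum>h<H. B h i * A h j) * g j) = (g (2*k) + g (2*k + 1)) / 2"
    for g :: "nat \<Rightarrow> complex"
  proof -
    have "(\<Sum>j<2*\<delta>. of_real (\<Sum>h<H. B h i * A h j) * g j)
        = (\<Sum>j<2*\<delta>. (if j div 2 = k then 1/2 else 0) * g j)"
      using BA i by (intro sum.cong) (auto simp: BA_cond_def k_def)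
    also have "\<dots> = (g (2*k) + g (2*k + 1)) / 2"
      by (simp add: sum_pair_block[OF k])
    finally show ?thesis .
  qed
  define S where "S t = (\<Sum>j<2*\<delta>. of_real (\<Sum>h<H. B h i * A h j)
                          * emb \<mu> t j * cnj (emb \<mu> (T - 1) j))" for t
  have S_prev: "S (T - 1) = 1"
  proof -
    have "S (T - 1) = (\<Sum>j<2*\<delta>. of_real (\<Sum>h<H. B h i * A h j) * 1)"
      unfolding S_def using T
      by (intro sum.cong) (simp_all add: mult.assoc emb_mult_cnj_emb l_unit)
    then show ?thesis using row[of "\<lambda>_. 1"] by simp
  qed
  have S_last: "S T = (l + cnj l) / 2"
  proof -
    have "S T = (\<Sum>j<2*\<delta>. of_real (\<Sum>h<H. B h i * A h j) * lam \<mu> j)"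
      unfolding S_def using T
      by (intro sum.cong) (simp_all add: mult.assoc emb_mult_cnj_emb l_unit)
    then show ?thesis using row[of "lam \<mu>"] lam_pair_sum[of \<mu> i] by (simp add: k_def l_def)
  qed
  have "Tth (2*\<delta>) H A B P T (emb \<mu>) i
      = of_real (P (T - 1) (T - 1)) * S (T - 1) * emb \<mu> (T - 1) i
        + of_real (P (T - 1) T) * S T * emb \<mu> T i"
    unfolding Tth_eq_sum_BA S_def using T P_zero by (intro sum_atLeastAtMost_last_two) simp_all
  also have "\<dots> = (l + cnj l) * l ^ (T - 1) - l ^ (T - 2)"
    unfolding P_diag P_next S_prev S_last using T by (simp add: emb_def l_def numeral_2_eq_2)
  also have "\<dots> = l ^ T + (l * cnj l) * l ^ (T - 2) - l ^ (T - 2)"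
  proof -
    have "l ^ (T - 1) = l * l ^ (T - 2)"
      using T by (simp add: power_Suc[symmetric] numeral_2_eq_2 Suc_diff_Suc)
    moreover have "l ^ T = l * l * l ^ (T - 2)"
      using T by (metis le_add_diff_inverse power_add power2_eq_square)
    ultimately show ?thesis by (simp add: algebra_simps)
  qed
  also have "\<dots> = l ^ T" using l_unit[OF i] by (simp add: l_def)
  finally show ?thesis by (simp add: l_def)
qed

corollary Tth_emb_exact:
  assumes "\<forall>k<\<delta>. cmod (\<mu> k) = 1" and "BA_cond \<delta> H A B" and "P_cond Tmax P"
    and "T \<in> {2..Tmax}" and "i < 2*\<delta>"
  shows "Tth (2*\<delta>) H A B P T (emb \<mu>) i = lam \<mu> i ^ T"
  using assms unfolding P_cond_def by (intro Tth_emb_eq_lam_power) auto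

lemma borel_measurable_cis_uniform:
  "cis \<in> borel_measurable (uniform_measure lborel {0..2*pi})"
  by (subst measurable_cong_sets[OF sets_uniform_measure refl],
      subst measurable_cong_sets[OF sets_lborel refl])
     (rule borel_measurable_continuous_onI, intro continuous_intros)

lemma prob_space_unif_circle: "prob_space unif_circle"
  unfolding unif_circle_def
  by (rule prob_space.prob_space_distr, rule prob_space_uniform_measure)
     (auto simp: borel_measurable_cis_uniform)

lemma AE_unif_circle_norm: "AE z in unif_circle. cmod z = 1"
  unfolding unif_circle_def by (subst AE_distr_iff[OF borel_measurable_cis_uniform]) auto

lemma AE_mu_law_unit: "AE \<mu> in mu_law \<delta>. \<forall>k<\<delta>. cmod (\<mu> k) = 1"
proof -
  have "\<forall>k\<in>{..<\<delta>}. AE \<mu> in mu_law \<delta>. cmod (\<mu> k) = 1"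
    unfolding mu_law_def using prob_space_unif_circle AE_unif_circle_norm
    by (auto intro!: AE_PiM_component)
  then have "AE \<mu> in mu_law \<delta>. \<forall>k\<in>{..<\<delta>}. cmod (\<mu> k) = 1"
    by (rule eventually_ball_finite[rotated]) simp
  then show ?thesis by (rule eventually_mono) auto
qed

lemma loss_eq_zero:
  assumes "BA_cond \<delta> H A B" and "P_cond Tmax P"
  shows "loss \<delta> H A B P Tmax = 0"
  unfolding loss_def
proof (intro sum.neutral ballI integral_eq_zero_AE)
  fix T assume T: "T \<in> {2..Tmax}"
  show "AE \<mu> in mu_law \<delta>. (\<Sum>i<2*\<delta>. (cmod (Tth (2*\<delta>) H A B P T (emb \<mu>) i - lam \<mu> i ^ T))\<^sup>2) = 0"
    using AE_mu_law_unit by eventually_elim (simp add: Tth_emb_exact[OF _ assms T])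
qed

lemma BA_cond_one_head_per_block:
  "BA_cond \<delta> \<delta> (\<lambda>h j. if j div 2 = h then 1 else 0) (\<lambda>h i. if i div 2 = h then 1/2 else 0)"
  unfolding BA_cond_def
proof (intro allI impI)
  fix i j :: nat assume i: "i < 2*\<delta>"
  have "(\<Sum>h<\<delta>. (if i div 2 = h then 1/2 else 0) * (if j div 2 = h then 1 else 0 :: real))
      = (\<Sum>h<\<delta>. if h = i div 2 then (if i div 2 = j div 2 then 1/2 else 0) else 0)"
    by (intro sum.cong) auto
  also have "\<dots> = (if i div 2 = j div 2 then 1/2 else 0)"
    using i by (subst sum.delta) auto
  finally show "(\<Sum>h<\<delta>. (if i div 2 = h then 1/2 else 0) * (if j div 2 = h then 1 else 0 :: real))
      = (if i div 2 = j div 2 then 1/2 else 0)" .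
qed

theorem lemma4:
  fixes \<delta> H Tmax :: nat and A B P :: "nat \<Rightarrow> nat \<Rightarrow> real" and \<mu> :: "nat \<Rightarrow> complex"
  assumes "H \<ge> 1" and "Tmax \<ge> 2"
    and "\<forall>k<\<delta>. cmod (\<mu> k) = 1"
    and "P_cond Tmax P"
    and "BA_cond \<delta> H A B"
  shows "(\<forall>T\<in>{2..Tmax}. \<forall>i<2*\<delta>. Tth (2*\<delta>) H A B P T (emb \<mu>) i = lam \<mu> i ^ T)
         \<and> loss \<delta> H A B P Tmax = 0
         \<and> (\<exists>A' B' :: nat \<Rightarrow> nat \<Rightarrow> real. BA_cond \<delta> \<delta> A' B' \<and> loss \<delta> \<delta> A' B' P Tmax = 0)"
  using Tth_emb_exact[OF assms(3,5,4)] loss_eq_zero[OF assms(5,4)]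
    BA_cond_one_head_per_block loss_eq_zero[OF BA_cond_one_head_per_block assms(4)]
  by blast

end
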